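(* Let $a,d$ be real numbers, let $A_{n,k}(a,d)$ be the general Eulerian numbers and $T_n(t,a,d)$ the general Eulerian polynomials defined below, and let $A_j(t)$ be the classical Eulerian polynomials defined below. Then for every integer $n\ge 0$, $$T_n(t,a,d)=\sum_{k=-1}^{n-1}A_{n,k}(a,d)t^{k+1}=\sum_{j=0}^n\binom{n}{j}d^jA_j(t)(at-a)^{n-j}.$$
   Context: For real numbers $a,d$, the general Eulerian numbers $A_{n,k}(a,d)$ (integers $n\ge 0$, $k$) are defined by $A_{0,-1}(a,d)=1$, $A_{n,k}(a,d)=0$ whenever $k\ge n$ or $k\le -2$, and for $n\ge 1$, $-1\le k\le n-1$: $$A_{n,k}(a,d)=(-a+(k+2)d)A_{n-1,k}(a,d)+(a+(n-k-1)d)A_{n-1,k-1}(a,d).$$ The general Eulerian polynomials are $T_n(t,a,d)=\sum_{k=-1}^{n-1}A_{n,k}(a,d)t^{k+1}$ (so $T_0(t,a,d)=1$). The classical Eulerian polynomials are defined by $A_0(t)=1$ and $A_n(t)=\sum_{k=0}^{n-1}\binom{n}{k}A_k(t)(t-1)^{n-1-k}$ for $n\ge 1$. Also $x^0=1$ for all $x$. *)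

theory Defs
  imports Complex_Main
begin

fun genEulerA :: "nat \<Rightarrow> int \<Rightarrow> real \<Rightarrow> real \<Rightarrow> real" where
  "genEulerA 0 k a d = (if k = -1 then 1 else 0)"
| "genEulerA (Suc n) k a d =
     (if k \<ge> int (Suc n) \<or> k \<le> -2 then 0
      else (- a + (of_int k + 2) * d) * genEulerA n k a d
         + (a + (of_nat (Suc n) - of_int k - 1) * d) * genEulerA n (k - 1) a d)"

definition genEulerT :: "nat \<Rightarrow> real \<Rightarrow> real \<Rightarrow> real \<Rightarrow> real" where
  "genEulerT n t a d = (\<Sum>k\<in>{-1..int n - 1}. genEulerA n k a d * t ^ nat (k + 1))"

fun eulerPoly :: "nat \<Rightarrow> real \<Rightarrow> real" where
  "eulerPoly n t = (if n = 0 then 1 else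
     (\<Sum>k<n. real (n choose k) * eulerPoly k t * (t - 1) ^ (n - 1 - k)))"

end

theory Submission
  imports Defs
begin

text \<open>
  The recurrence for \<open>A\<^sub>n\<^sub>,\<^sub>k(a,d)\<close> is equivalent to the differential recurrence
  \<open>T\<^sub>n\<^sub>+\<^sub>1 = (d - a + (a + n d) t) T\<^sub>n + d t (1 - t) T\<^sub>n'\<close>.  Its special case \<open>a = 0, d = 1\<close>,
  \<open>E\<^sub>j\<^sub>+\<^sub>1 = (1 + j t) E\<^sub>j + t (1 - t) E\<^sub>j'\<close> for \<open>E\<^sub>j = T\<^sub>j(t,0,1)\<close>, shows that the binomial sum
  \<open>\<Sum>\<^sub>j C(n,j) d\<^sup>j E\<^sub>j (a t - a)\<^sup>n\<^sup>-\<^sup>j\<close> satisfies the same recurrence, which proves the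
  expansion with \<open>E\<^sub>j\<close> in place of the classical \<open>A\<^sub>j\<close>.  Finally \<open>E\<^sub>n = A\<^sub>n\<close>: the expansion at
  \<open>a = d = 1\<close> together with \<open>T\<^sub>n(t,1,1) = t E\<^sub>n\<close> is the defining recurrence of \<open>A\<^sub>n\<close>
  multiplied by \<open>t - 1\<close>, and the point \<open>t = 1\<close> follows by continuity.
\<close>

declare eulerPoly.simps[simp del]

lemma genEulerA_eq_0: "int n \<le> k \<or> k \<le> -2 \<Longrightarrow> genEulerA n k a d = 0"
  by (cases n) auto

definition eulerian_coeff :: "nat \<Rightarrow> nat \<Rightarrow> real \<Rightarrow> real \<Rightarrow> real" where
  "eulerian_coeff n m a d = genEulerA n (int m - 1) a d"

lemma eulerian_coeff_eq_0: "n < m \<Longrightarrow> eulerian_coeff n m a d = 0"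
  unfolding eulerian_coeff_def by (rule genEulerA_eq_0) auto

lemma eulerian_coeff_Suc_0: "eulerian_coeff (Suc n) 0 a d = (d - a) * eulerian_coeff n 0 a d"
  unfolding eulerian_coeff_def by (simp add: genEulerA_eq_0)

lemma eulerian_coeff_Suc_Suc:
  "eulerian_coeff (Suc n) (Suc m) a d =
     (- a + (real m + 2) * d) * eulerian_coeff n (Suc m) a d
     + (a + (real n - real m) * d) * eulerian_coeff n m a d"
proof (cases "n < m")
  case True
  then show ?thesis by (simp add: eulerian_coeff_eq_0)
next
  case False
  then show ?thesis unfolding eulerian_coeff_def by (simp add: algebra_simps)
qed

lemma genEulerT_eq_sum_coeff: "genEulerT n t a d = (\<Sum>m\<le>n. eulerian_coeff n m a d * t ^ m)"
proof -
  have range: "{-1..int n - 1} = (\<lambda>m. int m - 1) ` {..n}"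
  proof (rule set_eqI, rule iffI)
    fix k assume "k \<in> {-1..int n - 1}"
    then show "k \<in> (\<lambda>m. int m - 1) ` {..n}"
      by (intro image_eqI[where x = "nat (k + 1)"]) auto
  qed auto
  have "inj_on (\<lambda>m. int m - 1) {..n}" by (auto simp: inj_on_def)
  then show ?thesis
    unfolding genEulerT_def range by (simp add: sum.reindex eulerian_coeff_def)
qed

definition genEulerT_deriv :: "nat \<Rightarrow> real \<Rightarrow> real \<Rightarrow> real \<Rightarrow> real" where
  "genEulerT_deriv n t a d = (\<Sum>m\<le>n. eulerian_coeff n m a d * (real m * t ^ (m - 1)))"

lemma has_real_derivative_genEulerT:
  "((\<lambda>t. genEulerT n t a d) has_real_derivative genEulerT_deriv n t a d) (at t)"
  unfolding genEulerT_eq_sum_coeff genEulerT_deriv_def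
  by (intro DERIV_sum DERIV_cmult) (simp add: DERIV_pow)

lemma isCont_genEulerT: "isCont (\<lambda>t. genEulerT n t a d) x"
  using has_real_derivative_genEulerT by (rule DERIV_isCont)

lemma mult_genEulerT_deriv:
  "t * genEulerT_deriv n t a d = (\<Sum>m\<le>n. real m * eulerian_coeff n m a d * t ^ m)"
  unfolding genEulerT_deriv_def sum_distrib_left
  by (rule sum.cong) (auto simp: power_eq_if)

lemma genEulerT_Suc:
  "genEulerT (Suc n) t a d =
     (d - a + (a + real n * d) * t) * genEulerT n t a d + d * t * (1 - t) * genEulerT_deriv n t a d"
proof -
  define c where "c m = eulerian_coeff n m a d" for m
  define P where "P = genEulerT n t a d"
  define Q where "Q = (\<Sum>m\<le>n. real m * c m * t ^ m)"
  define g where "g m = (- a + (real m + 1) * d) * c m * t ^ m" for m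
  have P: "P = (\<Sum>m\<le>n. c m * t ^ m)"
    unfolding P_def c_def genEulerT_eq_sum_coeff ..
  have step: "eulerian_coeff (Suc n) (Suc m) a d * t ^ Suc m
      = g (Suc m) + (a + (real n - real m) * d) * c m * t ^ Suc m" for m
    by (simp add: eulerian_coeff_Suc_Suc g_def c_def algebra_simps)
  have "genEulerT (Suc n) t a d
      = eulerian_coeff (Suc n) 0 a d + (\<Sum>m\<le>n. eulerian_coeff (Suc n) (Suc m) a d * t ^ Suc m)"
    unfolding genEulerT_eq_sum_coeff by (subst sum.atMost_Suc_shift) simp
  also have "\<dots> = (g 0 + (\<Sum>m\<le>n. g (Suc m)))
      + (\<Sum>m\<le>n. (a + (real n - real m) * d) * c m * t ^ Suc m)"
    by (simp only: step sum.distrib) (simp add: eulerian_coeff_Suc_0 g_def c_def)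
  also have "g 0 + (\<Sum>m\<le>n. g (Suc m)) = (\<Sum>m\<le>Suc n. g m)"
    by (subst sum.atMost_Suc_shift) simp
  also have "\<dots> = (\<Sum>m\<le>n. g m)"
    by (simp add: g_def c_def eulerian_coeff_eq_0)
  also have "\<dots> = (d - a) * P + d * Q"
    by (simp add: g_def P Q_def sum_distrib_left sum.distrib[symmetric] algebra_simps)
  also have "(\<Sum>m\<le>n. (a + (real n - real m) * d) * c m * t ^ Suc m)
      = t * (a + real n * d) * P - d * t * Q"
    by (simp add: P Q_def sum_distrib_left sum_subtractf[symmetric] algebra_simps)
  finally show ?thesis
    using mult_genEulerT_deriv[of t n a d] unfolding Q_def c_def P_def
    by (simp add: algebra_simps)
qed

lemma binomial_sum_Suc:
  fixes u :: "nat \<Rightarrow> real" and w :: real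
  shows "(\<Sum>j\<le>Suc n. real (Suc n choose j) * u j * w ^ (Suc n - j))
     = w * (\<Sum>j\<le>n. real (n choose j) * u j * w ^ (n - j))
       + (\<Sum>j\<le>n. real (n choose j) * u (Suc j) * w ^ (n - j))"
proof -
  have "(\<Sum>j\<le>Suc n. real (Suc n choose j) * u j * w ^ (Suc n - j))
      = u 0 * w ^ Suc n + (\<Sum>j\<le>n. real (n choose j) * u (Suc j) * w ^ (n - j))
          + (\<Sum>j\<le>n. real (n choose Suc j) * u (Suc j) * w ^ (n - j))"
    by (subst sum.atMost_Suc_shift) (simp add: sum.distrib algebra_simps)
  moreover have "w * (\<Sum>j\<le>n. real (n choose j) * u j * w ^ (n - j))
      = (\<Sum>j\<le>Suc n. real (n choose j) * u j * w ^ (Suc n - j))"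
    by (simp add: sum_distrib_left Suc_diff_le algebra_simps)
  moreover have "\<dots> = u 0 * w ^ Suc n + (\<Sum>j\<le>n. real (n choose Suc j) * u (Suc j) * w ^ (n - j))"
    by (subst sum.atMost_Suc_shift) simp
  ultimately show ?thesis by simp
qed

definition eulerian_binomial_sum :: "nat \<Rightarrow> real \<Rightarrow> real \<Rightarrow> real \<Rightarrow> real" where
  "eulerian_binomial_sum n a d t =
     (\<Sum>j\<le>n. real (n choose j) * d ^ j * genEulerT j t 0 1 * (a * t - a) ^ (n - j))"

definition eulerian_binomial_sum_deriv :: "nat \<Rightarrow> real \<Rightarrow> real \<Rightarrow> real \<Rightarrow> real" where
  "eulerian_binomial_sum_deriv n a d t =
     (\<Sum>j\<le>n. real (n choose j) * d ^ j * (genEulerT_deriv j t 0 1 * (a * t - a) ^ (n - j)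
        + genEulerT j t 0 1 * (real (n - j) * (a * t - a) ^ (n - j - 1) * a)))"

lemma has_real_derivative_eulerian_binomial_sum:
  "((\<lambda>t. eulerian_binomial_sum n a d t) has_real_derivative eulerian_binomial_sum_deriv n a d t) (at t)"
  unfolding eulerian_binomial_sum_def eulerian_binomial_sum_deriv_def
  by (auto intro!: derivative_eq_intros has_real_derivative_genEulerT simp: algebra_simps)

lemma eulerian_binomial_sum_deriv_recurrence:
  "d * t * (1 - t) * eulerian_binomial_sum_deriv n a d t
     = (\<Sum>j\<le>n. real (n choose j) * d ^ Suc j * genEulerT (Suc j) t 0 1 * (a * t - a) ^ (n - j))
       - d * (1 + real n * t) * eulerian_binomial_sum n a d t"
proof -
  define y where "y = a * t - a"
  define E where "E j = genEulerT j t 0 1" for j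
  define D where "D j = genEulerT_deriv j t 0 1" for j
  have summand: "d * t * (1 - t) * (real (n choose j) * d ^ j * (D j * y ^ (n - j)
      + E j * (real (n - j) * y ^ (n - j - 1) * a)))
      = real (n choose j) * d ^ Suc j * E (Suc j) * y ^ (n - j)
        - d * (1 + real n * t) * (real (n choose j) * d ^ j * E j * y ^ (n - j))"
    if "j \<le> n" for j
  proof -
    have E_Suc: "t * (1 - t) * D j = E (Suc j) - (1 + real j * t) * E j"
      using genEulerT_Suc[of j t 0 1] unfolding E_def D_def by simp
    have y_pow: "real (n - j) * y ^ (n - j - 1) * a * (1 - t) = - real (n - j) * y ^ (n - j)"
    proof (cases "n - j")
      case (Suc k)
      then show ?thesis by (simp add: y_def algebra_simps)
    qed simp
    have "d * t * (1 - t) * (real (n choose j) * d ^ j * (D j * y ^ (n - j)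
        + E j * (real (n - j) * y ^ (n - j - 1) * a)))
        = real (n choose j) * d ^ Suc j * (y ^ (n - j) * (t * (1 - t) * D j)
          + t * E j * (real (n - j) * y ^ (n - j - 1) * a * (1 - t)))"
      by (simp add: algebra_simps)
    also have "\<dots> = real (n choose j) * d ^ Suc j * E (Suc j) * y ^ (n - j)
        - d * (1 + (real j + real (n - j)) * t) * (real (n choose j) * d ^ j * E j * y ^ (n - j))"
      unfolding E_Suc y_pow by (simp add: algebra_simps)
    finally show ?thesis
      using that by simp
  qed
  show ?thesis
    unfolding eulerian_binomial_sum_deriv_def eulerian_binomial_sum_def sum_distrib_left
      y_def[symmetric] E_def[symmetric] D_def[symmetric]
    by (subst sum.cong[OF refl summand]) (simp_all only: sum_subtractf atMost_iff)
qed

lemma genEulerT_eq_eulerian_binomial_sum: "genEulerT n t a d = eulerian_binomial_sum n a d t"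
proof (induction n arbitrary: t)
  case 0
  then show ?case
    by (simp add: genEulerT_def eulerian_binomial_sum_def)
next
  case (Suc n)
  define y where "y = a * t - a"
  have "(\<lambda>t. genEulerT n t a d) = (\<lambda>t. eulerian_binomial_sum n a d t)"
    using Suc by auto
  then have deriv: "genEulerT_deriv n t a d = eulerian_binomial_sum_deriv n a d t"
    using has_real_derivative_genEulerT has_real_derivative_eulerian_binomial_sum
    by (metis DERIV_unique)
  have "genEulerT (Suc n) t a d = (d - a + (a + real n * d) * t) * eulerian_binomial_sum n a d t
      + d * t * (1 - t) * eulerian_binomial_sum_deriv n a d t"
    by (simp add: genEulerT_Suc Suc deriv)
  also have "\<dots> = y * eulerian_binomial_sum n a d t
      + (\<Sum>j\<le>n. real (n choose j) * d ^ Suc j * genEulerT (Suc j) t 0 1 * y ^ (n - j))"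
    unfolding eulerian_binomial_sum_deriv_recurrence y_def by (simp add: algebra_simps)
  also have "\<dots> = eulerian_binomial_sum (Suc n) a d t"
    using binomial_sum_Suc[of n "\<lambda>j. d ^ j * genEulerT j t 0 1" y]
    by (simp add: eulerian_binomial_sum_def y_def mult.assoc)
  finally show ?case .
qed

lemma genEulerA_1_1_shift: "1 \<le> n \<Longrightarrow> genEulerA n k 1 1 = genEulerA n (k - 1) 0 1"
proof (induction n arbitrary: k)
  case 0
  then show ?case by simp
next
  case (Suc n)
  show ?case
  proof (cases "n = 0")
    case True
    then show ?thesis by (cases "k = -1 \<or> k = 0 \<or> k = 1") auto
  next
    case False
    then have IH: "\<And>k. genEulerA n k 1 1 = genEulerA n (k - 1) 0 1"
      using Suc by simp
    consider "k = int n + 1" | "k = -1" | "k \<noteq> int n + 1 \<and> k \<noteq> -1" by blast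
    then show ?thesis
    proof cases
      case 1
      then show ?thesis using genEulerA_eq_0[of n "int n" 0 1] by simp
    next
      case 2
      then show ?thesis using genEulerA_eq_0[of n "-2" 1 1] by simp
    next
      case 3
      then show ?thesis using IH[of k] IH[of "k - 1"] by (auto simp: algebra_simps)
    qed
  qed
qed

lemma genEulerT_1_1: "1 \<le> n \<Longrightarrow> genEulerT n t 1 1 = t * genEulerT n t 0 1"
proof -
  assume n: "1 \<le> n"
  have top: "eulerian_coeff n n 0 1 = 0"
    using genEulerA_1_1_shift[OF n, of "int n"] genEulerA_eq_0[of n "int n" 1 1]
    unfolding eulerian_coeff_def by simp
  have bottom: "eulerian_coeff n 0 1 1 = 0"
    using genEulerA_1_1_shift[OF n, of "-1"] genEulerA_eq_0[of n "-2" 0 1]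
    unfolding eulerian_coeff_def by simp
  have shift: "eulerian_coeff n (Suc m) 1 1 = eulerian_coeff n m 0 1" for m
    using genEulerA_1_1_shift[OF n, of "int (Suc m) - 1"]
    unfolding eulerian_coeff_def by (simp add: algebra_simps)
  have "genEulerT n t 1 1 = (\<Sum>m<n. eulerian_coeff n m 0 1 * t ^ Suc m)"
    unfolding genEulerT_eq_sum_coeff using n
    by (subst sum.atMost_shift) (auto simp: shift bottom)
  also have "\<dots> = t * genEulerT n t 0 1"
    unfolding genEulerT_eq_sum_coeff
    by (simp add: lessThan_Suc_atMost[symmetric] top sum_distrib_left algebra_simps)
  finally show ?thesis .
qed

lemma isCont_eq_off_point:
  fixes f g :: "'a::{perfect_space, t2_space} \<Rightarrow> 'b::t2_space"
  assumes "isCont f x" "isCont g x" "\<And>y. y \<noteq> x \<Longrightarrow> f y = g y"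
  shows "f x = g x"
proof -
  have "(g \<longlongrightarrow> f x) (at x)"
    using assms(1,3) LIM_equal[of x f g] by (auto simp: isCont_def)
  with assms(2) show ?thesis
    by (auto simp: isCont_def intro: LIM_unique)
qed

lemma eulerPoly_eq_genEulerT: "eulerPoly n t = genEulerT n t 0 1"
proof (induction n arbitrary: t rule: less_induct)
  case (less n)
  show ?case
  proof (cases "n = 0")
    case True
    then show ?thesis by (subst eulerPoly.simps) (simp add: genEulerT_def)
  next
    case False
    define X where "X = (\<lambda>t. \<Sum>k<n. real (n choose k) * genEulerT k t 0 1 * (t - 1) ^ (n - 1 - k))"
    have eulerPoly_X: "eulerPoly n t = X t" for t
      using False less unfolding X_def
      by (subst eulerPoly.simps) (auto intro!: sum.cong)
    have X_off_1: "X t = genEulerT n t 0 1" if "t \<noteq> 1" for t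
    proof -
      have "(t - 1) * X t = (\<Sum>k<n. real (n choose k) * genEulerT k t 0 1 * (t - 1) ^ (n - k))"
        unfolding X_def sum_distrib_left
      proof (rule sum.cong[OF refl])
        fix k assume "k \<in> {..<n}"
        then have "n - k = Suc (n - 1 - k)" by auto
        then show "(t - 1) * (real (n choose k) * genEulerT k t 0 1 * (t - 1) ^ (n - 1 - k))
            = real (n choose k) * genEulerT k t 0 1 * (t - 1) ^ (n - k)"
          by (simp only: power_Suc mult_ac)
      qed
      also have "\<dots> = genEulerT n t 1 1 - genEulerT n t 0 1"
        by (subst genEulerT_eq_eulerian_binomial_sum[of n t 1 1])
          (simp only: eulerian_binomial_sum_def lessThan_Suc_atMost[symmetric] sum.lessThan_Suc,
           simp)
      also have "\<dots> = (t - 1) * genEulerT n t 0 1"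
        using genEulerT_1_1[of n t] False by (simp add: algebra_simps)
      finally have "(t - 1) * X t = (t - 1) * genEulerT n t 0 1" .
      with that show ?thesis by simp
    qed
    have "isCont X 1"
      unfolding X_def by (intro continuous_intros isCont_genEulerT)
    then have "X 1 = genEulerT n 1 0 1"
      using isCont_genEulerT X_off_1 by (rule isCont_eq_off_point)
    then show ?thesis
      using eulerPoly_X X_off_1 by (cases "t = 1") auto
  qed
qed

theorem lemma3p2:
  fixes a d t :: real and n :: nat
  shows "genEulerT n t a d = (\<Sum>k\<in>{-1..int n - 1}. genEulerA n k a d * t ^ nat (k + 1))
       \<and> genEulerT n t a d
         = (\<Sum>j=0..n. real (n choose j) * d ^ j * eulerPoly j t * (a * t - a) ^ (n - j))"
proof
  show "genEulerT n t a d = (\<Sum>k\<in>{-1..int n - 1}. genEulerA n k a d * t ^ nat (k + 1))"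
    by (simp add: genEulerT_def)
  show "genEulerT n t a d
         = (\<Sum>j=0..n. real (n choose j) * d ^ j * eulerPoly j t * (a * t - a) ^ (n - j))"
    by (simp only: genEulerT_eq_eulerian_binomial_sum[of n t a d] eulerian_binomial_sum_def
        atLeast0AtMost eulerPoly_eq_genEulerT)
qed

end
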